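(* Define real sequences $(x_n)$, $(y_n)$ by, for $n\ge 0$: $x_{4n+1}=0$, $x_{4n+2}=3^{-(n+1)}$, $x_{4n+3}=2\cdot3^{-(n+1)}$, $x_{4n+4}=9\cdot 3^{-(n+1)}$, and $y_{4n+1}=6^{-(n+1)}$, $y_{4n+2}=y_{4n+3}=y_{4n+4}=-6^{-(n+1)}$. Let $E=E(x_n,y_n)\subset\mathbb R^2$. Then: (a) $E_0=S(\{0,1,2,9\},(3^{-n})_n)$; (b) $E$ has empty interior in $\mathbb R^2$; (c) for every $t\in(0,\tfrac98)$ and every $\varepsilon>0$, the open ball $B((t,0),\varepsilon)$ contains a point $p$ such that $\{p\}$ is a connected component of $E$.
   Context: For an absolutely convergent series $\sum_n v_n$ in $\mathbb R^2$, its achievement set is $E(v_n)=\{\sum_{n=1}^\infty \varepsilon_n v_n : (\varepsilon_n)\in\{0,1\}^{\mathbb N}\}$; $E(x_n,y_n)$ denotes the achievement set of $((x_n,y_n))_n$. For $A\subset\mathbb R^2$, $A_0=\{s\in\mathbb R:(s,0)\in A\}$. For a finite $P\subset\mathbb R$ and a sequence $(a_n)$, $S(P,a)=\{\sum_{n=1}^\infty \varepsilon_n a_n : (\varepsilon_n)\in P^{\mathbb N}\}$. *)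

theory Defs
  imports "HOL-Analysis.Analysis"
begin

text \<open>Sequences are indexed from 1 as in the paper: the value at index 0 is never used.\<close>

definition achievement_set :: "(nat \<Rightarrow> 'a::real_normed_vector) \<Rightarrow> 'a set" where
  "achievement_set v = {(\<Sum>n. (if \<epsilon> n then v (Suc n) else 0)) | \<epsilon> :: nat \<Rightarrow> bool. True}"

definition section0 :: "(real \<times> real) set \<Rightarrow> real set" where
  "section0 A = {s. (s, 0) \<in> A}"

definition S_set :: "real set \<Rightarrow> (nat \<Rightarrow> real) \<Rightarrow> real set" where
  "S_set P a = {(\<Sum>n. e n * a (Suc n)) | e. \<forall>n. e n \<in> P}"

definition xseq :: "nat \<Rightarrow> real" where
  "xseq k = (let n = (k - 1) div 4; r = (k - 1) mod 4 in
     if r = 0 then 0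
     else if r = 1 then (1/3) ^ (n + 1)
     else if r = 2 then 2 * (1/3) ^ (n + 1)
     else 9 * (1/3) ^ (n + 1))"

definition yseq :: "nat \<Rightarrow> real" where
  "yseq k = (let n = (k - 1) div 4; r = (k - 1) mod 4 in
     if r = 0 then (1/6) ^ (n + 1) else - ((1/6) ^ (n + 1)))"

end

theory Submission
  imports Defs
begin

text \<open>Grouping the series in blocks of four, a point of \<open>E\<close> is
  \<open>(\<Sum>n. a\<^sub>n 3\<^sup>-\<^sup>n\<^sup>-\<^sup>1, \<Sum>n. b\<^sub>n 6\<^sup>-\<^sup>n\<^sup>-\<^sup>1)\<close>, where the subset chosen in block \<open>n\<close>
  yields \<open>a\<^sub>n \<in> {0..12}\<close> and \<open>b\<^sub>n \<in> {-3..1}\<close>; moreover \<open>b\<^sub>n = 0\<close> forces \<open>a\<^sub>n \<in> {0,1,2,9}\<close>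
  and \<open>b\<^sub>n = 1\<close> forces \<open>a\<^sub>n = 0\<close>. Base-6 digits from five consecutive integers are uniquely
  determined by the expansion, and the set of such expansions has empty interior. Hence the
  second coordinate of a point of \<open>E\<close> determines all \<open>b\<^sub>n\<close>, which gives (a); \<open>E\<close> has empty interior;
  and a connected subset of \<open>E\<close> has constant second coordinate. If \<open>b\<^sub>n = 1\<close> for all \<open>n \<ge> k\<close>, the
  component of the point is thus contained in a finite set, so it is a singleton; such points
  with \<open>b\<^sub>n = 0\<close> for \<open>n < k\<close> approximate every \<open>(t, 0)\<close>, because every \<open>t \<in> [0, 9/8]\<close> has a
  base-3 expansion with digits in \<open>{0,1,2,9}\<close>.\<close>

lemma sums_Pair:
  assumes "f sums a" "g sums b"
  shows "(\<lambda>n. (f n, g n)) sums (a, b)"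
proof -
  have "(\<lambda>n. (\<Sum>i<n. f i, \<Sum>i<n. g i)) \<longlonglongrightarrow> (a, b)"
    using assms unfolding sums_def by (rule tendsto_Pair)
  moreover have "(\<lambda>n. \<Sum>i<n. (f i, g i)) = (\<lambda>n. (\<Sum>i<n. f i, \<Sum>i<n. g i))"
    by (auto simp: fst_sum snd_sum prod_eq_iff)
  ultimately show ?thesis
    unfolding sums_def by simp
qed

lemma summable_power_div:
  fixes c :: real
  assumes "0 < c" "c < 1" "0 < m"
  shows "summable (\<lambda>k. c ^ (k div m))"
proof (rule summable_comparison_test')
  define r where "r = root m c"
  have r: "0 < r" "r < 1" "r ^ m = c"
    using assms by (auto simp: r_def)
  show "summable (\<lambda>k. r ^ k / c)"
    using r by (intro summable_divide summable_geometric) simp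
  show "norm (c ^ (k div m)) \<le> r ^ k / c" for k
  proof -
    have "c ^ (k div m) * c \<le> c ^ (k div m) * r ^ (k mod m)"
      using r assms by (intro mult_left_mono power_decreasing) auto
    also have "\<dots> = (r ^ m) ^ (k div m) * r ^ (k mod m)"
      using r(3) by simp
    also have "\<dots> = r ^ k"
      by (simp only: power_mult[symmetric] power_add[symmetric] mult_div_mod_eq)
    finally show ?thesis
      using assms by (simp add: field_simps)
  qed
qed

lemma connected_empty_interior_subsingleton:
  fixes S :: "real set"
  assumes "connected S" "interior S = {}" "a \<in> S" "b \<in> S"
  shows "a = b"
proof (rule ccontr)
  assume "a \<noteq> b"
  define lo hi where "lo = min a b" and "hi = max a b"
  have "lo < hi" "lo \<in> S" "hi \<in> S"
    using \<open>a \<noteq> b\<close> assms(3,4) unfolding lo_def hi_def by linarith+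
  then have "{lo<..<hi} \<subseteq> S"
    using assms(1) unfolding connected_iff_interval by fastforce
  then have "{lo<..<hi} \<subseteq> interior S"
    by (rule interior_maximal) simp
  moreover have "(lo + hi) / 2 \<in> {lo<..<hi}"
    using \<open>lo < hi\<close> by simp
  ultimately show False
    using assms(2) by blast
qed

lemma finite_digit_sums:
  fixes f :: "nat \<Rightarrow> 'a \<Rightarrow> 'b::comm_monoid_add"
  assumes "finite D"
  shows "finite {\<Sum>i<k. f i (a i) | a. \<forall>i. a i \<in> D}"
proof (rule finite_subset)
  show "{\<Sum>i<k. f i (a i) | a. \<forall>i. a i \<in> D} \<subseteq> (\<lambda>a. \<Sum>i<k. f i (a i)) ` (\<Pi>\<^sub>E i\<in>{..<k}. D)"
  proof clarify
    fix a :: "nat \<Rightarrow> 'a" assume "\<forall>i. a i \<in> D"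
    then show "(\<Sum>i<k. f i (a i)) \<in> (\<lambda>a. \<Sum>i<k. f i (a i)) ` (\<Pi>\<^sub>E i\<in>{..<k}. D)"
      by (intro image_eqI[of _ _ "restrict a {..<k}"] sum.cong) auto
  qed
  show "finite ((\<lambda>a. \<Sum>i<k. f i (a i)) ` (\<Pi>\<^sub>E i\<in>{..<k}. D))"
    using assms by (intro finite_imageI finite_PiE) auto
qed

lemma connected_finite_eq_singleton:
  fixes S :: "'a::metric_space set"
  assumes "connected S" "finite S" "p \<in> S"
  shows "S = {p}"
  using connected_finite_iff_sing[OF assms(1)] assms(2,3) by (metis empty_iff singletonD)

locale signed_digits =
  fixes q lo hi :: int
  assumes lo_le_hi: "lo \<le> hi"
    and narrow: "hi - lo + 2 \<le> q"
begin

definition digit_seqs :: "(nat \<Rightarrow> int) set" where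
  "digit_seqs = {d. \<forall>n. lo \<le> d n \<and> d n \<le> hi}"

definition expansion :: "(nat \<Rightarrow> int) \<Rightarrow> real" where
  "expansion d = (\<Sum>n. of_int (d n) / of_int q ^ Suc n)"

lemma q_gt_1: "1 < real_of_int q"
  using lo_le_hi narrow by linarith

lemma tail_in_digit_seqs: "d \<in> digit_seqs \<Longrightarrow> (\<lambda>n. d (Suc n)) \<in> digit_seqs"
  by (simp add: digit_seqs_def)

lemma expansion_zero: "expansion (\<lambda>_. 0) = 0"
  by (simp add: expansion_def)

lemma geometric_digit_sums: "(\<lambda>n. c / real_of_int q ^ Suc n) sums (c / (real_of_int q - 1))"
proof -
  have "(\<lambda>n. (1 / real_of_int q) ^ n) sums (1 / (1 - 1 / real_of_int q))"
    by (rule geometric_sums) (use q_gt_1 in simp)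
  then have "(\<lambda>n. c / real_of_int q * (1 / real_of_int q) ^ n)
      sums (c / real_of_int q * (1 / (1 - 1 / real_of_int q)))"
    by (rule sums_mult)
  moreover have "c / real_of_int q * (1 / real_of_int q) ^ n = c / real_of_int q ^ Suc n" for n
    by (simp add: power_one_over)
  ultimately show ?thesis
    using q_gt_1 by (simp add: field_simps)
qed

lemma expansion_sums:
  assumes "d \<in> digit_seqs"
  shows "(\<lambda>n. of_int (d n) / real_of_int q ^ Suc n) sums expansion d"
proof -
  have "norm (of_int (d n) / real_of_int q ^ Suc n) \<le> (\<bar>lo\<bar> + \<bar>hi\<bar>) / real_of_int q ^ Suc n"
    for n
  proof -
    have "lo \<le> d n" "d n \<le> hi"
      using assms by (auto simp: digit_seqs_def)
    then have "\<bar>d n\<bar> \<le> \<bar>lo\<bar> + \<bar>hi\<bar>"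
      by linarith
    then show ?thesis
      using q_gt_1 by (simp add: abs_divide divide_right_mono)
  qed
  then have "summable (\<lambda>n. of_int (d n) / real_of_int q ^ Suc n)"
    by (intro summable_comparison_test'[OF sums_summable[OF geometric_digit_sums]])
  then show ?thesis
    unfolding expansion_def by (rule summable_sums)
qed

lemma expansion_bounds:
  assumes "d \<in> digit_seqs"
  shows "lo / (real_of_int q - 1) \<le> expansion d" "expansion d \<le> hi / (real_of_int q - 1)"
proof -
  have "real_of_int lo \<le> d n" "real_of_int (d n) \<le> hi" for n
    using assms by (auto simp: digit_seqs_def)
  then have "lo / real_of_int q ^ Suc n \<le> d n / real_of_int q ^ Suc n"
    and "d n / real_of_int q ^ Suc n \<le> hi / real_of_int q ^ Suc n" for n
    using q_gt_1 by (simp_all add: divide_right_mono)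
  then show "lo / (real_of_int q - 1) \<le> expansion d" "expansion d \<le> hi / (real_of_int q - 1)"
    using sums_le[OF _ geometric_digit_sums expansion_sums[OF assms]]
      sums_le[OF _ expansion_sums[OF assms] geometric_digit_sums] by auto
qed

lemma expansion_Suc:
  assumes "d \<in> digit_seqs"
  shows "expansion d = (of_int (d 0) + expansion (\<lambda>n. d (Suc n))) / real_of_int q"
proof -
  let ?f = "\<lambda>n. of_int (d n) / real_of_int q ^ Suc n"
  have "(\<lambda>n. ?f (Suc n)) sums (expansion (\<lambda>n. d (Suc n)) / real_of_int q)"
    using sums_divide[OF expansion_sums[OF tail_in_digit_seqs[OF assms]], of "real_of_int q"]
    by (simp add: field_simps)
  then have "?f sums (expansion (\<lambda>n. d (Suc n)) / real_of_int q + ?f 0)"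
    by (rule sums_Suc_iff[THEN iffD1])
  then show ?thesis
    using expansion_sums[OF assms] sums_unique2 by (fastforce simp: add_divide_distrib)
qed

lemma expansion_leading_digit:
  assumes "d \<in> digit_seqs" "d' \<in> digit_seqs" "expansion d = expansion d'"
  shows "d 0 = d' 0" "expansion (\<lambda>n. d (Suc n)) = expansion (\<lambda>n. d' (Suc n))"
proof -
  have diff:
    "real_of_int (d 0 - d' 0) = expansion (\<lambda>n. d' (Suc n)) - expansion (\<lambda>n. d (Suc n))"
    using expansion_Suc[OF assms(1)] expansion_Suc[OF assms(2)] assms(3) q_gt_1
    by (simp add: field_simps)
  have "(hi - lo) / (real_of_int q - 1) < 1"
    using narrow q_gt_1 by (simp add: divide_less_eq)
  then have "\<bar>real_of_int (d 0 - d' 0)\<bar> < 1"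
    unfolding diff using expansion_bounds[OF tail_in_digit_seqs[OF assms(1)]]
      expansion_bounds[OF tail_in_digit_seqs[OF assms(2)]]
    by (simp add: diff_divide_distrib abs_less_iff)
  then show "d 0 = d' 0"
    by linarith
  with diff show "expansion (\<lambda>n. d (Suc n)) = expansion (\<lambda>n. d' (Suc n))"
    by simp
qed

lemma expansion_inj: "inj_on expansion digit_seqs"
proof -
  have "d n = d' n" if "d \<in> digit_seqs" "d' \<in> digit_seqs" "expansion d = expansion d'" for n d d'
    using that
  proof (induction n arbitrary: d d')
    case 0
    then show ?case by (rule expansion_leading_digit)
  next
    case (Suc n)
    then show ?case
      using expansion_leading_digit(2) tail_in_digit_seqs by blast
  qed
  then show ?thesis
    by (auto simp: inj_on_def)
qed

text \<open>For \<open>k = 0\<close> the witness is the midpoint of the gap between the largest expansion and the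
  smallest one translated by \<open>1\<close>, which is nonempty by \<open>narrow\<close>. Prepending a digit rescales by
  \<open>q\<close>; avoiding all integer translates survives this because \<open>q\<close> is an integer.\<close>
lemma expansion_approx_by_non_expansion:
  assumes "d \<in> digit_seqs"
  shows "\<exists>z. \<bar>z - expansion d\<bar> < 1 / real_of_int q ^ k
           \<and> (\<forall>m::int. \<forall>d'\<in>digit_seqs. z + m \<noteq> expansion d')"
  using assms
proof (induction k arbitrary: d)
  case 0
  define a b where "a = lo / (real_of_int q - 1)" and "b = hi / (real_of_int q - 1)"
  have gap: "b - a < 1"
    using narrow q_gt_1 by (simp add: a_def b_def diff_divide_distrib[symmetric] divide_less_eq)
  have bounds: "a \<le> expansion d'" "expansion d' \<le> b" if "d' \<in> digit_seqs" for d'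
    using expansion_bounds[OF that] by (simp_all add: a_def b_def)
  define z where "z = (a + b + 1) / 2"
  have z: "b < z" "z - 1 < a"
    using gap by (simp_all add: z_def field_simps)
  have "\<bar>z - expansion d\<bar> < 1"
    using z bounds[OF "0.prems"] by (simp add: abs_less_iff)
  moreover have "z + m \<noteq> expansion d'" if "d' \<in> digit_seqs" for m :: int and d'
  proof (cases "0 \<le> m")
    case True
    then show ?thesis
      using z bounds[OF that] by linarith
  next
    case False
    then have "real_of_int m \<le> -1"
      by linarith
    then show ?thesis
      using z bounds[OF that] by linarith
  qed
  ultimately show ?case
    by auto
next
  case (Suc k)
  obtain z where z: "\<bar>z - expansion (\<lambda>n. d (Suc n))\<bar> < 1 / real_of_int q ^ k"
    and avoid: "\<And>m d'. d' \<in> digit_seqs \<Longrightarrow> z + real_of_int m \<noteq> expansion d'"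
    using Suc.IH[OF tail_in_digit_seqs[OF Suc.prems]] by blast
  have "\<bar>(d 0 + z) / q - expansion d\<bar> = \<bar>z - expansion (\<lambda>n. d (Suc n))\<bar> / q"
    using q_gt_1
    by (simp add: expansion_Suc[OF Suc.prems] diff_divide_distrib[symmetric] abs_divide)
  also have "\<dots> < (1 / real_of_int q ^ k) / q"
    using z q_gt_1 by (intro divide_strict_right_mono) auto
  also have "\<dots> = 1 / real_of_int q ^ Suc k"
    by simp
  finally have close: "\<bar>(d 0 + z) / q - expansion d\<bar> < 1 / real_of_int q ^ Suc k" .
  have "(d 0 + z) / q + m \<noteq> expansion d'" if "d' \<in> digit_seqs" for m :: int and d'
  proof
    assume "(d 0 + z) / q + m = expansion d'"
    then have "z + real_of_int (d 0 + q * m - d' 0) = expansion (\<lambda>n. d' (Suc n))"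
      using q_gt_1 by (simp add: expansion_Suc[OF that] field_simps)
    then show False
      using avoid tail_in_digit_seqs[OF that] by blast
  qed
  with close show ?case
    by blast
qed

lemma interior_expansions: "interior (expansion ` digit_seqs) = {}"
proof (rule ccontr)
  assume "interior (expansion ` digit_seqs) \<noteq> {}"
  then obtain d where d: "d \<in> digit_seqs" "expansion d \<in> interior (expansion ` digit_seqs)"
    using interior_subset by blast
  then obtain r where r: "0 < r" "ball (expansion d) r \<subseteq> expansion ` digit_seqs"
    by (auto simp: mem_interior)
  obtain k where k: "(1 / real_of_int q) ^ k < r"
    using real_arch_pow_inv[OF r(1), of "1 / real_of_int q"] q_gt_1 by auto
  obtain z where z: "\<bar>z - expansion d\<bar> < 1 / real_of_int q ^ k" "z \<notin> expansion ` digit_seqs"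
    using expansion_approx_by_non_expansion[OF d(1), of k] by (metis add_0_right image_iff of_int_0)
  have "z \<in> ball (expansion d) r"
    using z(1) k by (simp add: dist_real_def abs_minus_commute power_one_over)
  with r(2) z(2) show False
    by blast
qed

end

text \<open>The terms \<open>4n+1, \<dots>, 4n+4\<close> of \<open>(xseq, yseq)\<close> are \<open>(0, 1)\<close>, \<open>(1, -1)\<close>, \<open>(2, -1)\<close>, \<open>(9, -1)\<close>
  scaled by \<open>(3\<^sup>-\<^sup>n\<^sup>-\<^sup>1, 6\<^sup>-\<^sup>n\<^sup>-\<^sup>1)\<close>; choosing a subset of them contributes
  \<open>(block_x, block_y)\<close> of the corresponding block of choices, scaled in the same way.\<close>

type_synonym block = "bool \<times> bool \<times> bool \<times> bool"

fun block_x :: "block \<Rightarrow> int" where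
  "block_x (_, b1, b2, b3) = of_bool b1 + 2 * of_bool b2 + 9 * of_bool b3"

fun block_y :: "block \<Rightarrow> int" where
  "block_y (b0, b1, b2, b3) = of_bool b0 - of_bool b1 - of_bool b2 - of_bool b3"

definition block :: "(nat \<Rightarrow> bool) \<Rightarrow> nat \<Rightarrow> block" where
  "block \<epsilon> n = (\<epsilon> (4 * n), \<epsilon> (4 * n + 1), \<epsilon> (4 * n + 2), \<epsilon> (4 * n + 3))"

definition digit_block :: "real \<Rightarrow> block" where
  "digit_block a = (a \<noteq> 0, a = 1, a = 2, a = 9)"

lemma block_x_range: "block_x b \<in> {0..12}"
  by (cases b) auto

lemma block_y_eq_0: "block_y b = 0 \<Longrightarrow> block_x b \<in> {0, 1, 2, 9}"
  by (cases b) (auto simp: of_bool_def split: if_splits)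

lemma block_y_eq_1: "block_y b = 1 \<Longrightarrow> block_x b = 0"
  by (cases b) (auto simp: of_bool_def split: if_splits)

lemma digit_block:
  assumes "a \<in> {0, 1, 2, 9}"
  shows "of_int (block_x (digit_block a)) = a" "block_y (digit_block a) = 0"
  using assms by (auto simp: digit_block_def)

lemma block_offset_div_mod:
  fixes n :: nat
  shows "Suc (4 * n) div 4 = n" "Suc (4 * n) mod 4 = 1"
    "Suc (Suc (4 * n)) div 4 = n" "Suc (Suc (4 * n)) mod 4 = 2"
    "Suc (Suc (Suc (4 * n))) div 4 = n" "Suc (Suc (Suc (4 * n))) mod 4 = 3"
  by presburger+

lemma surj_block: "\<exists>\<epsilon>. block \<epsilon> = b"
proof
  show "block (\<lambda>k. case b (k div 4) of (b0, b1, b2, b3) \<Rightarrow>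
      if k mod 4 = 0 then b0 else if k mod 4 = 1 then b1 else if k mod 4 = 2 then b2 else b3) = b"
    by (simp add: block_def fun_eq_iff block_offset_div_mod del: Suc_eq_plus1 split: prod.splits)
qed

interpretation base6: signed_digits 6 "-3" 1
  by unfold_locales simp_all

abbreviation xy_achievement_set :: "(real \<times> real) set" where
  "xy_achievement_set \<equiv> achievement_set (\<lambda>k. (xseq k, yseq k))"

definition xsum :: "(nat \<Rightarrow> block) \<Rightarrow> real" where
  "xsum b = (\<Sum>n. of_int (block_x (b n)) * (1 / 3) ^ Suc n)"

definition ysum :: "(nat \<Rightarrow> block) \<Rightarrow> real" where
  "ysum b = base6.expansion (\<lambda>n. block_y (b n))"

lemma block_y_digit_seqs: "(\<lambda>n. block_y (b n)) \<in> base6.digit_seqs"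
proof -
  have "-3 \<le> block_y c \<and> block_y c \<le> 1" for c
    by (cases c) auto
  then show ?thesis
    by (simp add: base6.digit_seqs_def)
qed

lemma xsum_sums: "(\<lambda>n. of_int (block_x (b n)) * (1 / 3) ^ Suc n) sums xsum b"
proof -
  have bound: "norm (of_int (block_x (b n)) * (1 / 3 :: real) ^ Suc n) \<le> 4 * (1 / 3) ^ n" for n
  proof -
    have "\<bar>real_of_int (block_x (b n))\<bar> \<le> 12"
      by (cases "b n") (simp add: of_bool_def)
    then have "\<bar>real_of_int (block_x (b n))\<bar> * (1 / 3) ^ Suc n \<le> 12 * (1 / 3 :: real) ^ Suc n"
      by (rule mult_right_mono) simp
    then show ?thesis
      by (simp add: abs_mult)
  qed
  have "summable (\<lambda>n. 4 * (1 / 3 :: real) ^ n)"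
    by (intro summable_mult summable_geometric) simp
  then have "summable (\<lambda>n. of_int (block_x (b n)) * (1 / 3 :: real) ^ Suc n)"
    using bound by (rule summable_comparison_test')
  then show ?thesis
    unfolding xsum_def by (rule summable_sums)
qed

lemma xsum_finite:
  assumes "\<And>n. k \<le> n \<Longrightarrow> block_x (b n) = 0"
  shows "xsum b = (\<Sum>i<k. of_int (block_x (b i)) * (1 / 3) ^ Suc i)"
  unfolding xsum_def using assms by (intro suminf_finite) auto

lemma xy_term_norm_le: "norm (xseq (Suc k), yseq (Suc k)) \<le> 4 * (1 / 3) ^ (k div 4)"
proof -
  have "\<bar>xseq (Suc k)\<bar> \<le> 9 * (1 / 3) ^ Suc (k div 4)"
    by (auto simp: xseq_def Let_def)
  moreover have "\<bar>yseq (Suc k)\<bar> = (1 / 6) ^ Suc (k div 4)"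
    by (auto simp: yseq_def Let_def)
  moreover have "(1 / 6 :: real) ^ Suc (k div 4) \<le> (1 / 6) ^ (k div 4)"
    by (rule power_decreasing) auto
  moreover have "(1 / 6 :: real) ^ (k div 4) \<le> (1 / 3) ^ (k div 4)"
    by (rule power_mono) auto
  ultimately show ?thesis
    using norm_Pair_le[of "xseq (Suc k)" "yseq (Suc k)"] by simp
qed

lemma xy_block_sum:
  "(\<Sum>k\<in>{n * 4..<n * 4 + 4}. if \<epsilon> k then (xseq (Suc k), yseq (Suc k)) else 0)
     = (of_int (block_x (block \<epsilon> n)) * (1 / 3) ^ Suc n, of_int (block_y (block \<epsilon> n)) / 6 ^ Suc n)"
proof -
  have "{n * 4..<n * 4 + 4} = {4 * n, Suc (4 * n), Suc (Suc (4 * n)), Suc (Suc (Suc (4 * n)))}"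
    by auto
  then show ?thesis
    by (simp add: block_def xseq_def yseq_def Let_def block_offset_div_mod zero_prod_def)
      (simp add: power_one_over field_simps numeral_3_eq_3)
qed

lemma xy_achievement_series_sums:
  "(\<lambda>k. if \<epsilon> k then (xseq (Suc k), yseq (Suc k)) else 0) sums (xsum (block \<epsilon>), ysum (block \<epsilon>))"
proof -
  let ?f = "\<lambda>k. if \<epsilon> k then (xseq (Suc k), yseq (Suc k)) else 0"
  have "summable (\<lambda>k. 4 * (1 / 3 :: real) ^ (k div 4))"
    by (intro summable_mult summable_power_div) auto
  moreover have "norm (?f k) \<le> 4 * (1 / 3) ^ (k div 4)" for k
    using xy_term_norm_le[of k] by simp
  ultimately have "summable ?f"
    by (rule summable_comparison_test')
  then have "?f sums suminf ?f"
    by (rule summable_sums)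
  then have "(\<lambda>n. sum ?f {n * 4..<n * 4 + 4}) sums suminf ?f"
    by (rule sums_group) simp
  moreover have "(\<lambda>n. sum ?f {n * 4..<n * 4 + 4}) sums (xsum (block \<epsilon>), ysum (block \<epsilon>))"
    unfolding xy_block_sum ysum_def
    using sums_Pair[OF xsum_sums base6.expansion_sums[OF block_y_digit_seqs]] by simp
  ultimately have "suminf ?f = (xsum (block \<epsilon>), ysum (block \<epsilon>))"
    by (rule sums_unique2)
  with \<open>?f sums suminf ?f\<close> show ?thesis
    by simp
qed

lemma xy_achievement_set_eq:
  "xy_achievement_set = {(xsum b, ysum b) | b. True}"
proof -
  have sum_eq: "(\<Sum>k. if \<epsilon> k then (xseq (Suc k), yseq (Suc k)) else 0) = (xsum (block \<epsilon>), ysum (block \<epsilon>))"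
    for \<epsilon>
    using sums_unique[OF xy_achievement_series_sums] by simp
  show ?thesis
  proof (intro set_eqI iffI)
    fix p assume "p \<in> xy_achievement_set"
    then show "p \<in> {(xsum b, ysum b) | b. True}"
      unfolding achievement_set_def sum_eq by auto
  next
    fix p assume "p \<in> {(xsum b, ysum b) | b. True}"
    then obtain b where "p = (xsum b, ysum b)"
      by auto
    moreover obtain \<epsilon> where "block \<epsilon> = b"
      using surj_block by blast
    ultimately show "p \<in> xy_achievement_set"
      unfolding achievement_set_def sum_eq by auto
  qed
qed

lemma section0_xy_achievement_set:
  "section0 xy_achievement_set = S_set {0, 1, 2, 9} (\<lambda>n. (1 / 3) ^ n)"
proof (intro set_eqI iffI)
  fix s assume "s \<in> section0 xy_achievement_set"
  then obtain b where s: "s = xsum b" and "ysum b = 0"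
    by (auto simp: section0_def xy_achievement_set_eq)
  moreover have "(\<lambda>_. 0) \<in> base6.digit_seqs"
    by (simp add: base6.digit_seqs_def)
  ultimately have "(\<lambda>n. block_y (b n)) = (\<lambda>_. 0)"
    using inj_onD[OF base6.expansion_inj _ block_y_digit_seqs]
    by (simp add: ysum_def base6.expansion_zero)
  then have "block_y (b n) = 0" for n
    by (metis fun_eq_iff)
  then have "block_x (b n) \<in> {0, 1, 2, 9}" for n
    by (rule block_y_eq_0)
  then have "of_int (block_x (b n)) \<in> {0, 1, 2, 9 :: real}" for n
    by (metis (mono_tags) empty_iff insert_iff of_int_0 of_int_1 of_int_numeral)
  with s show "s \<in> S_set {0, 1, 2, 9} (\<lambda>n. (1 / 3) ^ n)"
    unfolding S_set_def xsum_def by (intro CollectI exI[of _ "\<lambda>n. of_int (block_x (b n))"]) simp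
next
  fix s assume "s \<in> S_set {0, 1, 2, 9} (\<lambda>n. (1 / 3) ^ n)"
  then obtain c where s: "s = (\<Sum>n. c n * (1 / 3) ^ Suc n)" and c: "\<And>n. c n \<in> {0, 1, 2, 9}"
    unfolding S_set_def by auto
  have "xsum (\<lambda>n. digit_block (c n)) = s" "ysum (\<lambda>n. digit_block (c n)) = 0"
    using c by (simp_all add: s xsum_def ysum_def digit_block base6.expansion_zero)
  then show "s \<in> section0 xy_achievement_set"
    unfolding section0_def xy_achievement_set_eq by (metis (mono_tags, lifting) mem_Collect_eq)
qed

lemma xy_achievement_set_subset: "xy_achievement_set \<subseteq> UNIV \<times> base6.expansion ` base6.digit_seqs"
  by (auto simp: xy_achievement_set_eq ysum_def block_y_digit_seqs)

lemma interior_xy_achievement_set: "interior xy_achievement_set = {}"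
  using interior_mono[OF xy_achievement_set_subset]
  by (simp add: interior_Times base6.interior_expansions)

lemma base3_0129_digit_step:
  assumes "x \<in> {0..9/8} \<union> {3..27/8}"
  shows "\<exists>d \<in> {0, 1, 2, 9}. 3 * x - d \<in> {0..9/8} \<union> {3..27/8 :: real}"
proof -
  consider "x \<le> 1/3" | "1/3 \<le> x" "x \<le> 2/3" | "2/3 \<le> x" "x \<le> 25/24"
    | "25/24 \<le> x" "x \<le> 9/8" | "3 \<le> x"
    using assms by fastforce
  then show ?thesis
  proof cases
    case 1 then show ?thesis using assms by (intro bexI[of _ 0]) auto
  next
    case 2 then show ?thesis by (intro bexI[of _ 1]) auto
  next
    case 3 then show ?thesis by (intro bexI[of _ 2]) auto
  next
    case 4 then show ?thesis by (intro bexI[of _ 0]) auto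
  next
    case 5 then show ?thesis using assms by (intro bexI[of _ 9]) auto
  qed
qed

lemma base3_0129_partial_expansion:
  fixes x :: real
  assumes "x \<in> {0..9/8} \<union> {3..27/8}"
  shows "\<exists>a. (\<forall>i. a i \<in> {0, 1, 2, 9})
           \<and> (\<exists>y \<in> {0..9/8} \<union> {3..27/8}. x = (\<Sum>i<k. a i * (1 / 3) ^ Suc i) + (1 / 3) ^ k * y)"
  using assms
proof (induction k arbitrary: x)
  case 0
  then show ?case
    by (intro exI[of _ "\<lambda>_. 0"]) auto
next
  case (Suc k)
  obtain d where d: "d \<in> {0, 1, 2, 9}" "3 * x - d \<in> {0..9/8} \<union> {3..27/8}"
    using base3_0129_digit_step[OF Suc.prems] by blast
  obtain a y where a: "\<forall>i. a i \<in> {0, 1, 2, 9}" and y: "y \<in> {0..9/8} \<union> {3..27/8}"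
    and x': "3 * x - d = (\<Sum>i<k. a i * (1 / 3) ^ Suc i) + (1 / 3) ^ k * y"
    using Suc.IH[OF d(2)] by blast
  let ?a = "case_nat d a"
  have "(\<Sum>i<Suc k. ?a i * (1 / 3) ^ Suc i) = d / 3 + (\<Sum>i<k. a i * (1 / 3) ^ Suc i) / 3"
    by (subst sum.lessThan_Suc_shift) (simp add: sum_divide_distrib)
  then have "x = (\<Sum>i<Suc k. ?a i * (1 / 3) ^ Suc i) + (1 / 3) ^ Suc k * y"
    using x' by simp
  moreover have "\<forall>i. ?a i \<in> {0, 1, 2, 9}"
    using a d(1) by (simp split: nat.split)
  ultimately show ?case
    using y by blast
qed

lemma ysum_unit_tail:
  assumes "\<And>n. block_y (b n) = (if n < k then 0 else 1)"
  shows "ysum b = 1 / (5 * 6 ^ k)"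
proof -
  let ?f = "\<lambda>n. real_of_int (block_y (b n)) / 6 ^ Suc n"
  have "(\<lambda>i. (1 / 6 ^ k) / 6 ^ Suc i) sums (1 / (5 * 6 ^ k) :: real)"
    using base6.geometric_digit_sums[of "1 / 6 ^ k"] by (simp add: mult_ac)
  moreover have "(\<lambda>i. ?f (i + k)) = (\<lambda>i. (1 / 6 ^ k) / 6 ^ Suc i)"
    by (simp add: assms power_add mult_ac)
  ultimately have "(\<lambda>i. ?f (i + k)) sums (1 / (5 * 6 ^ k))"
    by simp
  then have "?f sums (1 / (5 * 6 ^ k) + (\<Sum>i<k. ?f i))"
    by (rule sums_iff_shift[THEN iffD1])
  moreover have "(\<Sum>i<k. ?f i) = 0"
    by (simp add: assms)
  ultimately show ?thesis
    using base6.expansion_sums[OF block_y_digit_seqs, of b] sums_unique2 by (simp add: ysum_def)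
qed

lemma unit_tail_approximation:
  assumes "t \<in> {0..9/8}"
  shows "\<exists>b. (\<forall>n\<ge>k. block_y (b n) = 1) \<and> dist (t, 0) (xsum b, ysum b) \<le> 5 * (1 / 3) ^ k"
proof -
  have "t \<in> {0..9/8} \<union> {3..27/8}"
    using assms by simp
  then obtain a y where a: "\<forall>i. a i \<in> {0, 1, 2, 9}" and y: "y \<in> {0..9/8} \<union> {3..27/8}"
    and t: "t = (\<Sum>i<k. a i * (1 / 3) ^ Suc i) + (1 / 3) ^ k * y"
    using base3_0129_partial_expansion[of t k] by blast
  define b where "b n = (if n < k then digit_block (a n) else (True, False, False, False))" for n
  have b_y: "block_y (b n) = (if n < k then 0 else 1)" for n
    using a by (simp add: b_def digit_block)
  have "xsum b = (\<Sum>i<k. of_int (block_x (b i)) * (1 / 3) ^ Suc i)"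
    by (rule xsum_finite) (simp add: b_def)
  also have "\<dots> = (\<Sum>i<k. a i * (1 / 3) ^ Suc i)"
    using a by (intro sum.cong) (simp_all add: b_def digit_block)
  finally have x_close: "\<bar>t - xsum b\<bar> \<le> 27/8 * (1 / 3) ^ k"
    using t y by (auto simp: abs_mult intro!: mult_right_mono)
  have y_close: "\<bar>ysum b\<bar> \<le> (1 / 3) ^ k"
  proof -
    have "(3 :: real) ^ k \<le> 5 * 6 ^ k"
      using power_mono[of "3 :: real" 6 k] zero_le_power[of "6 :: real" k] by linarith
    then have "1 / (5 * 6 ^ k) \<le> (1 / 3 :: real) ^ k"
      by (simp add: power_one_over divide_left_mono)
    then show ?thesis
      using ysum_unit_tail[OF b_y] by simp
  qed
  have "dist (t, 0) (xsum b, ysum b) \<le> \<bar>t - xsum b\<bar> + \<bar>ysum b\<bar>"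
    using norm_Pair_le[of "t - xsum b" "- ysum b"] by (simp add: dist_norm)
  also have "\<dots> \<le> 27/8 * (1 / 3) ^ k + (1 / 3) ^ k"
    using x_close y_close by (rule add_mono)
  also have "\<dots> \<le> 5 * (1 / 3) ^ k"
    by simp
  finally have "dist (t, 0) (xsum b, ysum b) \<le> 5 * (1 / 3) ^ k" .
  moreover have "\<forall>n\<ge>k. block_y (b n) = 1"
    by (simp add: b_y)
  ultimately show ?thesis
    by blast
qed

lemma connected_component_unit_tail:
  assumes "\<And>n. k \<le> n \<Longrightarrow> block_y (b n) = 1"
  shows "connected_component_set xy_achievement_set (xsum b, ysum b) = {(xsum b, ysum b)}"
    (is "?C = _")
proof -
  have C_sub: "?C \<subseteq> xy_achievement_set"
    by (rule connected_component_subset)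
  have conn: "connected (snd ` ?C)"
    by (intro connected_continuous_image[OF _ connected_connected_component]
        continuous_on_snd continuous_on_id)
  have "snd ` ?C \<subseteq> base6.expansion ` base6.digit_seqs"
    using C_sub xy_achievement_set_subset by auto
  then have int: "interior (snd ` ?C) = {}"
    using interior_mono base6.interior_expansions by blast
  have p: "(xsum b, ysum b) \<in> ?C"
    by (auto simp: xy_achievement_set_eq intro!: connected_component_refl)
  define F where
    "F = {\<Sum>i<k. of_int (a i) * (1 / 3 :: real) ^ Suc i | a. \<forall>i. a i \<in> {0..12 :: int}}"
  have "?C \<subseteq> F \<times> {ysum b}"
  proof
    fix q assume q: "q \<in> ?C"
    then obtain b' where q_eq: "q = (xsum b', ysum b')"
      using C_sub by (auto simp: xy_achievement_set_eq)
    have "snd q = snd (xsum b, ysum b)"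
      using q p by (intro connected_empty_interior_subsingleton[OF conn int] imageI)
    then have "ysum b' = ysum b"
      by (simp add: q_eq)
    then have "(\<lambda>n. block_y (b' n)) = (\<lambda>n. block_y (b n))"
      unfolding ysum_def
      by (rule inj_onD[OF base6.expansion_inj _ block_y_digit_seqs block_y_digit_seqs])
    then have "block_x (b' n) = 0" if "k \<le> n" for n
      using assms[OF that] block_y_eq_1 by (metis fun_eq_iff)
    then have "xsum b' = (\<Sum>i<k. of_int (block_x (b' i)) * (1 / 3) ^ Suc i)"
      by (rule xsum_finite)
    then have "xsum b' \<in> F"
      unfolding F_def mem_Collect_eq using block_x_range
      by (intro exI[of _ "\<lambda>i. block_x (b' i)"] conjI) auto
    with q_eq \<open>ysum b' = ysum b\<close> show "q \<in> F \<times> {ysum b}"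
      by simp
  qed
  moreover have "finite F"
    unfolding F_def by (rule finite_digit_sums) simp
  ultimately have "finite ?C"
    by (meson finite.emptyI finite_SigmaI finite_insert finite_subset)
  with p show ?thesis
    by (intro connected_finite_eq_singleton connected_connected_component)
qed

lemma isolated_points_near_axis:
  assumes "t \<in> {0<..<9/8}" "0 < \<epsilon>"
  shows "\<exists>p \<in> ball (t, 0) \<epsilon>. p \<in> xy_achievement_set
           \<and> connected_component_set xy_achievement_set p = {p}"
proof -
  obtain k where k: "(1 / 3 :: real) ^ k < \<epsilon> / 5"
    using real_arch_pow_inv[of "\<epsilon> / 5" "1 / 3"] assms(2) by auto
  obtain b where b: "\<forall>n\<ge>k. block_y (b n) = 1"
    and close: "dist (t, 0) (xsum b, ysum b) \<le> 5 * (1 / 3) ^ k"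
    using unit_tail_approximation[of t k] assms(1) by auto
  have "(xsum b, ysum b) \<in> ball (t, 0) \<epsilon>"
    using close k by simp
  moreover have "(xsum b, ysum b) \<in> xy_achievement_set"
    by (auto simp: xy_achievement_set_eq)
  moreover have "connected_component_set xy_achievement_set (xsum b, ysum b) = {(xsum b, ysum b)}"
    using b by (intro connected_component_unit_tail[of k]) auto
  ultimately show ?thesis
    by blast
qed

theorem mainTheorem8:
  defines "E \<equiv> achievement_set (\<lambda>k. (xseq k, yseq k))"
  shows "section0 E = S_set {0, 1, 2, 9} (\<lambda>n. (1/3) ^ n)
       \<and> interior E = {}
       \<and> (\<forall>t \<in> {0<..<9/8}. \<forall>\<epsilon>>0. \<exists>p \<in> ball (t, 0) \<epsilon>.
             p \<in> E \<and> connected_component_set E p = {p})"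
  unfolding E_def using section0_xy_achievement_set interior_xy_achievement_set isolated_points_near_axis by blast

end
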